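(* For any $n\in\mathbb{N}$, the monoid $\mathrm{rps}_n$ does not satisfy any non-trivial identity of length less than or equal to $n$.
   Context: Let $\mathcal{A}_n=\{1<2<\cdots<n\}$. An rPS tableau is a finite (possibly empty) sequence of nonempty bottom-justified columns of boxes filled with positive integers, such that the entries of each column are weakly decreasing from top to bottom and the bottom entries of the columns form a strictly increasing sequence from left to right. Right insertion of a symbol $a$ into an rPS tableau $B$: if $a$ is strictly greater than every entry of the bottom row, append a new column consisting of $a$ at the right end; otherwise, let $z$ be the leftmost bottom-row entry with $z\geq a$ and put $a$ in a new box at the bottom of the column of $z$ (the previous entries of that column move up one box). For $w=w_1\cdots w_k$, $\mathfrak{R}_r(w)$ is obtained by starting with the empty tableau and right-inserting $w_1,\dots,w_k$ in order. The monoid $\mathrm{rps}_n$ is the quotient of $\mathcal{A}_n^*$ by the congruence $u\equiv v\iff\mathfrak{R}_r(u)=\mathfrak{R}_r(v)$. An identity is a formal equality $u=v$ of words over a countable alphabet of variables; it is non-trivial if $u\neq v$ as words; a monoid $M$ satisfies it if equality holds under every substitution of elements of $M$ for the variables (i.e. for every morphism from the free monoid on the variables to $M$). The length of an identity $u=v$ is $|u|$, the length of its left-hand side. *)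

theory Defs
  imports Main
begin

text \<open>Letters of the alphabet A_n = {1 < ... < n} are natural numbers 1..n.
  An rPS tableau is a list of columns (left to right); each column is stored
  bottom-first, i.e. the head of a column is its bottom entry.\<close>

type_synonym rps_tableau = "nat list list"

definition words_over :: "nat \<Rightarrow> nat list set" where
  "words_over n = {w. set w \<subseteq> {1..n}}"

fun rps_rinsert :: "rps_tableau \<Rightarrow> nat \<Rightarrow> rps_tableau" where
  "rps_rinsert [] a = [[a]]"
| "rps_rinsert (c # cs) a =
     (if a \<le> hd c then (a # c) # cs else c # rps_rinsert cs a)"

definition rps_Rr :: "nat list \<Rightarrow> rps_tableau" where
  "rps_Rr w = foldl rps_rinsert [] w"

definition rps_cong :: "nat \<Rightarrow> nat list \<Rightarrow> nat list \<Rightarrow> bool" where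
  "rps_cong n u v \<longleftrightarrow> u \<in> words_over n \<and> v \<in> words_over n \<and> rps_Rr u = rps_Rr v"

text \<open>Variables are natural numbers (a countable alphabet); an identity is a pair
  of words (u, v) over the variables.  A morphism from the free monoid on the
  variables to rps_n = A_n^*/rps_cong is determined by choosing, for each variable,
  a representative word over A_n (every element of rps_n is the class of such a word,
  and rps_cong is a congruence); its value on a word u is the class of the
  concatenation of the images.  Hence rps_n satisfies u = v iff for every such
  assignment the two concatenations are rps_cong-equivalent.\<close>
definition subst_word :: "(nat \<Rightarrow> nat list) \<Rightarrow> nat list \<Rightarrow> nat list" where
  "subst_word \<sigma> u = concat (map \<sigma> u)"

definition rps_satisfies :: "nat \<Rightarrow> nat list \<Rightarrow> nat list \<Rightarrow> bool" where
  "rps_satisfies n u v \<longleftrightarrow>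
     (\<forall>\<sigma>. (\<forall>x. \<sigma> x \<in> words_over n) \<longrightarrow>
        rps_cong n (subst_word \<sigma> u) (subst_word \<sigma> v))"

end

theory Submission
  imports Defs "HOL-Library.Sublist"
begin

text \<open>Right insertion never changes the total number of boxes, and the bottom row evolves by
  Schensted's row insertion, so its length is the length of a longest strictly increasing
  subsequence. Substituting every variable by the same letter therefore shows that both sides
  of a satisfied identity have the same length. Substituting each variable x by the decreasing
  word of the positions of x in u turns u into a word containing 1 2 \<dots> |u| as a subsequence;
  since a decreasing word contributes at most one letter to an increasing subsequence, the image
  of v contains 1 2 \<dots> |u| only if u is a subsequence of v. Hence a satisfied identity u = v
  with |u| \<le> n has u a subsequence of v of the same length, i.e. u = v.\<close>

fun row_insert :: "nat list \<Rightarrow> nat \<Rightarrow> nat list" where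
  "row_insert [] a = [a]"
| "row_insert (b # bs) a = (if a \<le> b then a # bs else b # row_insert bs a)"

lemma row_insert_not_Nil: "row_insert B a \<noteq> []"
  by (cases B) auto

lemma nth_0_row_insert_le: "row_insert B a ! 0 \<le> a"
  by (cases B) auto

lemma set_row_insert: "set (row_insert B a) \<subseteq> insert a (set B)"
  by (induction B) auto

lemma length_row_insert_ge: "length B \<le> length (row_insert B a)"
  by (induction B) auto

lemma nth_row_insert_le: "i < length B \<Longrightarrow> row_insert B a ! i \<le> B ! i"
  by (induction B arbitrary: i) (auto simp: nth_Cons split: nat.splits)

lemma sorted_row_insert: "sorted_wrt (<) B \<Longrightarrow> sorted_wrt (<) (row_insert B a)"
  by (induction B) (use set_row_insert in fastforce)+

lemma nth_row_insert_cases: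
  assumes "i < length (row_insert B a)"
  shows "(i < length B \<and> row_insert B a ! i = B ! i) \<or>
    (row_insert B a ! i = a \<and> (i = 0 \<or> (i - 1 < length B \<and> B ! (i - 1) < a)))"
  using assms
proof (induction B arbitrary: i)
  case (Cons b bs)
  show ?case
  proof (cases "a \<le> b")
    case True
    then show ?thesis using Cons.prems by (cases i) auto
  next
    case False
    show ?thesis
    proof (cases i)
      case (Suc j)
      then have "j < length (row_insert bs a)" using Cons.prems False by auto
      from Cons.IH[OF this] show ?thesis using False Suc by (cases j) auto
    qed (use False in auto)
  qed
qed simp

lemma nth_Suc_row_insert_le:
  assumes "sorted_wrt (<) B" "m < length B" "B ! m < a"
  shows "Suc m < length (row_insert B a) \<and> row_insert B a ! Suc m \<le> a"
  using assms
proof (induction B arbitrary: m)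
  case (Cons b bs)
  have "b < a"
    using Cons.prems by (cases m) (auto intro: order.strict_trans)
  then have row: "row_insert (b # bs) a = b # row_insert bs a" by simp
  show ?case
  proof (cases m)
    case 0
    then show ?thesis using row row_insert_not_Nil[of bs a] nth_0_row_insert_le[of bs a]
      by (cases "row_insert bs a") auto
  next
    case (Suc j)
    then show ?thesis using Cons.IH[of j] Cons.prems row by simp
  qed
qed simp

section \<open>The bottom row and increasing subsequences\<close>

abbreviation bottom_row :: "nat list \<Rightarrow> nat list" where
  "bottom_row w \<equiv> foldl row_insert [] w"

lemma map_hd_rps_rinsert: "map hd (rps_rinsert T a) = row_insert (map hd T) a"
  by (induction T) auto

lemma length_rps_Rr: "length (rps_Rr w) = length (bottom_row w)"
proof -
  have "map hd (foldl rps_rinsert T w) = foldl row_insert (map hd T) w" for T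
    by (induction w arbitrary: T) (auto simp: map_hd_rps_rinsert)
  from this[of "[]"] show ?thesis
    unfolding rps_Rr_def by (metis length_map list.map(1))
qed

lemma length_concat_rps_rinsert: "length (concat (rps_rinsert T a)) = Suc (length (concat T))"
  by (induction T) auto

lemma length_concat_rps_Rr: "length (concat (rps_Rr w)) = length w"
proof -
  have "length (concat (foldl rps_rinsert T w)) = length (concat T) + length w" for T
    by (induction w arbitrary: T) (auto simp: length_concat_rps_rinsert)
  from this[of "[]"] show ?thesis
    unfolding rps_Rr_def by simp
qed

lemma sorted_bottom_row: "sorted_wrt (<) (bottom_row w)"
  by (induction w rule: rev_induct) (auto intro: sorted_row_insert)

lemma sorted_wrt_subseq: "subseq xs ys \<Longrightarrow> sorted_wrt P ys \<Longrightarrow> sorted_wrt P xs"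
  by (induction rule: list_emb.induct) (auto dest: list_emb_set)

lemma subseq_snocE:
  assumes "subseq s (w @ [a])"
  obtains "subseq s w" | s' where "s = s' @ [a]" "subseq s' w"
proof -
  from assms obtain s1 s2 where "s = s1 @ s2" "subseq s1 w" "subseq s2 [a]"
    by (rule subseq_appendE)
  moreover have "s2 = [] \<or> s2 = [a]"
    using \<open>subseq s2 [a]\<close> by (cases s2) (auto split: if_splits)
  ultimately show ?thesis using that by auto
qed

lemma increasing_subseq_below_bottom_row:
  assumes "i < length (bottom_row w)"
  shows "\<exists>s. subseq s w \<and> sorted_wrt (<) s \<and> length s = Suc i
    \<and> (\<forall>x\<in>set s. x \<le> bottom_row w ! i)"
  using assms
proof (induction w arbitrary: i rule: rev_induct)
  case (snoc a w)
  define B where "B = bottom_row w"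
  have i: "i < length (row_insert B a)" using snoc.prems by (simp add: B_def)
  from nth_row_insert_cases[OF i]
  have "\<exists>s. subseq s (w @ [a]) \<and> sorted_wrt (<) s \<and> length s = Suc i
      \<and> (\<forall>x\<in>set s. x \<le> row_insert B a ! i)"
  proof
    assume "i < length B \<and> row_insert B a ! i = B ! i"
    then obtain s where "subseq s w" "sorted_wrt (<) s" "length s = Suc i"
      "\<forall>x\<in>set s. x \<le> row_insert B a ! i"
      using snoc.IH unfolding B_def by fastforce
    then show ?thesis by (intro exI[of _ s]) (auto intro: subseq_rev_drop_many)
  next
    assume new: "row_insert B a ! i = a \<and> (i = 0 \<or> (i - 1 < length B \<and> B ! (i - 1) < a))"
    show ?thesis
    proof (cases i)
      case 0
      then show ?thesis using new by (intro exI[of _ "[a]"]) (auto simp: subseq_singleton_left)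
    next
      case (Suc j)
      then obtain s where "subseq s w" "sorted_wrt (<) s" "length s = Suc j"
        "\<forall>x\<in>set s. x \<le> B ! j"
        using snoc.IH[of j] new unfolding B_def by auto
      then show ?thesis using new Suc
        by (intro exI[of _ "s @ [a]"]) (auto simp: sorted_wrt_append)
    qed
  qed
  then show ?case by (simp add: B_def)
qed simp

lemma bottom_row_below_increasing_subseq:
  assumes "subseq (s @ [x]) w" "sorted_wrt (<) (s @ [x])"
  shows "length s < length (bottom_row w) \<and> bottom_row w ! length s \<le> x"
  using assms
proof (induction w arbitrary: s x rule: rev_induct)
  case (snoc a w)
  define B where "B = bottom_row w"
  from snoc.prems(1) have "length s < length (row_insert B a) \<and> row_insert B a ! length s \<le> x"
  proof (cases rule: subseq_snocE)
    case 1
    then have "length s < length B \<and> B ! length s \<le> x"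
      using snoc.IH snoc.prems(2) unfolding B_def by blast
    then show ?thesis
      using length_row_insert_ge[of B a] nth_row_insert_le[of "length s" B a] by auto
  next
    case 2
    then have "x = a" and "subseq s w" by auto
    show ?thesis
    proof (cases s rule: rev_cases)
      case Nil
      then show ?thesis using \<open>x = a\<close> row_insert_not_Nil[of B a] nth_0_row_insert_le[of B a]
        by auto
    next
      fix t y
      assume s_eq: "s = t @ [y]"
      have "y < a" and "sorted_wrt (<) (t @ [y])"
        using snoc.prems(2) \<open>x = a\<close> s_eq by (auto simp: sorted_wrt_append)
      then have "length t < length B \<and> B ! length t \<le> y"
        using snoc.IH \<open>subseq s w\<close> s_eq unfolding B_def by blast
      then show ?thesis
        using nth_Suc_row_insert_le[OF sorted_bottom_row[of w, folded B_def]] \<open>y < a\<close>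
          \<open>x = a\<close> s_eq by simp
    qed
  qed
  then show ?case by (simp add: B_def)
qed simp

lemma increasing_subseq_le_length_rps_Rr:
  assumes "subseq s w" "sorted_wrt (<) s"
  shows "length s \<le> length (rps_Rr w)"
proof (cases s rule: rev_cases)
  case (snoc t x)
  then show ?thesis
    using bottom_row_below_increasing_subseq[of t x w] assms by (simp add: length_rps_Rr)
qed simp

lemma increasing_subseq_length_rps_Rr:
  obtains s where "subseq s w" "sorted_wrt (<) s" "length s = length (rps_Rr w)"
proof (cases "bottom_row w")
  case Nil
  then show ?thesis using that[of "[]"] by (simp add: length_rps_Rr)
next
  case (Cons b bs)
  then show ?thesis
    using increasing_subseq_below_bottom_row[of "length bs" w] that by (auto simp: length_rps_Rr)
qed

section \<open>Identities satisfied by \<open>rps\<^sub>n\<close>\<close>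

lemma length_subst_word_const: "length (subst_word (\<lambda>_. [c]) u) = length u"
  unfolding subst_word_def by (induction u) auto

lemma rps_satisfies_rps_Rr_eq:
  "rps_satisfies n u v \<Longrightarrow> \<forall>x. \<sigma> x \<in> words_over n \<Longrightarrow>
    rps_Rr (subst_word \<sigma> u) = rps_Rr (subst_word \<sigma> v)"
  unfolding rps_satisfies_def rps_cong_def by blast

lemma rps_satisfies_length_eq:
  assumes "n \<ge> 1" "rps_satisfies n u v"
  shows "length u = length v"
proof -
  have "[1] \<in> words_over n" using assms(1) by (simp add: words_over_def)
  then have "rps_Rr (subst_word (\<lambda>_. [1]) u) = rps_Rr (subst_word (\<lambda>_. [1]) v)"
    using rps_satisfies_rps_Rr_eq[OF assms(2), of "\<lambda>_. [1]"] by blast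
  then show ?thesis
    by (metis length_concat_rps_Rr length_subst_word_const)
qed

text \<open>Positions are counted from 1 so that they are letters of A_n.\<close>
definition occurrences :: "nat list \<Rightarrow> nat \<Rightarrow> nat list" where
  "occurrences u z = filter (\<lambda>i. u ! (i - 1) = z) (rev [1..<Suc (length u)])"

lemma set_occurrences:
  "i \<in> set (occurrences u z) \<longleftrightarrow> 1 \<le> i \<and> i \<le> length u \<and> u ! (i - 1) = z"
  unfolding occurrences_def by auto

lemma increasing_subseq_occurrences_length_le_1:
  assumes "subseq s (occurrences u z)" "sorted_wrt (<) s"
  shows "length s \<le> 1"
proof -
  have "sorted_wrt (>) s"
    using sorted_wrt_subseq[OF assms(1)]
    unfolding occurrences_def by (auto simp: sorted_wrt_filter sorted_wrt_rev)
  with assms(2) show ?thesis by (cases s; cases "tl s") auto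
qed

lemma upt_subseq_concat_occurrences:
  "subseq [Suc i..<Suc (length u)] (concat (map (occurrences u) (drop i u)))"
proof (induction "length u - i" arbitrary: i)
  case (Suc m)
  then have i: "i < length u" by simp
  have "[Suc i..<Suc (length u)] = [Suc i] @ [Suc (Suc i)..<Suc (length u)]"
    using i by (simp add: upt_conv_Cons del: upt_Suc)
  moreover have "concat (map (occurrences u) (drop i u))
      = occurrences u (u ! i) @ concat (map (occurrences u) (drop (Suc i) u))"
    by (subst Cons_nth_drop_Suc[OF i, symmetric]) simp
  moreover have "subseq [Suc i] (occurrences u (u ! i))"
    using i by (simp add: subseq_singleton_left set_occurrences)
  moreover have "subseq [Suc (Suc i)..<Suc (length u)]
      (concat (map (occurrences u) (drop (Suc i) u)))"
    using Suc.hyps(1)[of "Suc i"] Suc.hyps(2) by simp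
  ultimately show ?case
    by (simp only: list_emb_append_mono)
qed simp

lemma subseq_drop_if_upt_subseq_concat_occurrences:
  "subseq [Suc i..<Suc (length u)] (concat (map (occurrences u) v)) \<Longrightarrow> subseq (drop i u) v"
proof (induction v arbitrary: i)
  case Nil
  then show ?case by (auto dest: list_emb_Nil2 simp del: upt_Suc)
next
  case (Cons z v)
  show ?case
  proof (cases "i < length u")
    case True
    have upt: "[Suc i..<Suc (length u)] = Suc i # [Suc (Suc i)..<Suc (length u)]"
      using True by (simp add: upt_conv_Cons)
    from Cons.prems obtain s1 s2 where split: "[Suc i..<Suc (length u)] = s1 @ s2"
      "subseq s1 (occurrences u z)" "subseq s2 (concat (map (occurrences u) v))"
      by (auto elim: subseq_appendE)
    have "sorted_wrt (<) (s1 @ s2)"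
      unfolding split(1)[symmetric] by (rule sorted_wrt_upt)
    then have "length s1 \<le> 1"
      using increasing_subseq_occurrences_length_le_1[OF split(2)] by (simp add: sorted_wrt_append)
    then consider "s1 = []" | x where "s1 = [x]"
      by (cases s1) auto
    then show ?thesis
    proof cases
      case 1
      then show ?thesis using Cons.IH split by (simp add: list_emb_Cons)
    next
      case 2
      then have "Suc i \<in> set (occurrences u z)" and "s2 = [Suc (Suc i)..<Suc (length u)]"
        using split upt by (auto simp: subseq_singleton_left)
      then have "u ! i = z" and "subseq (drop (Suc i) u) v"
        using Cons.IH[of "Suc i"] split(3) by (auto simp: set_occurrences)
      then show ?thesis
        using True by (simp add: Cons_nth_drop_Suc[symmetric])
    qed
  qed simp
qed

lemma increasing_within_atLeastAtMost_eq_upt: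
  assumes "sorted_wrt (<) s" "set s \<subseteq> {1..k}" "k \<le> length s"
  shows "s = [1..<Suc k]"
proof -
  have distinct: "distinct s" and sorted: "sorted s"
    using assms(1) by (auto simp: strict_sorted_iff)
  have "card {1..k} \<le> card (set s)"
    using assms(3) distinct by (simp add: distinct_card)
  then have "set s = {1..k}"
    by (rule card_seteq[OF finite_atLeastAtMost assms(2)])
  also have "\<dots> = set [1..<Suc k]"
    by (simp only: set_upt atLeastLessThanSuc_atLeastAtMost)
  finally show ?thesis
    by (rule sorted_distinct_set_unique[OF sorted distinct sorted_upt distinct_upt])
qed

lemma rps_satisfies_subseq:
  assumes "length u \<le> n" "rps_satisfies n u v"
  shows "subseq u v"
proof -
  define k where "k = length u"
  define W where "W = concat (map (occurrences u) u)"
  define W' where "W' = concat (map (occurrences u) v)"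
  have "\<forall>x. occurrences u x \<in> words_over n"
    using assms(1) by (auto simp: words_over_def set_occurrences)
  then have "rps_Rr W = rps_Rr W'"
    using rps_satisfies_rps_Rr_eq[OF assms(2)] unfolding W_def W'_def subst_word_def by blast
  moreover have "k \<le> length (rps_Rr W)"
    using increasing_subseq_le_length_rps_Rr[OF _ sorted_wrt_upt, of 1 "Suc k" W]
      upt_subseq_concat_occurrences[of 0 u]
    unfolding W_def k_def by (simp del: upt_Suc)
  moreover obtain s where s: "subseq s W'" "sorted_wrt (<) s" "length s = length (rps_Rr W')"
    by (rule increasing_subseq_length_rps_Rr)
  ultimately have "k \<le> length s" by simp
  moreover have "set s \<subseteq> {1..k}"
  proof -
    have "set W' \<subseteq> {1..k}"
      unfolding W'_def k_def by (auto simp: set_occurrences)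
    then show ?thesis using list_emb_set[OF s(1)] by blast
  qed
  ultimately have "s = [1..<Suc k]"
    using increasing_within_atLeastAtMost_eq_upt s(2) by blast
  then show ?thesis
    using subseq_drop_if_upt_subseq_concat_occurrences[of 0 u v] s(1)
    unfolding W'_def k_def by simp
qed

theorem proposition4p8:
  fixes n :: nat and u v :: "nat list"
  assumes "n \<ge> 1"
    and "u \<noteq> v"
    and "length u \<le> n"
  shows "\<not> rps_satisfies n u v"
proof
  assume "rps_satisfies n u v"
  then have "subseq u v" and "length u = length v"
    using assms(1,3) rps_satisfies_subseq rps_satisfies_length_eq by blast+
  then show False
    using assms(2) subseq_same_length by blast
qed

end
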